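(* Let $\kappa$ be an uncountable regular cardinal and $\mu>1$ a cardinal. Let $A$ be the set of all $x\in{}^\kappa\mu$ such that $x(\alpha)=0$ for only finitely many $\alpha<\kappa$. Then $A$ is a closed subset of ${}^\kappa\mu$ that is not a retract of ${}^\kappa\mu$ (i.e. there is no continuous $f:{}^\kappa\mu\to A$ with $f\restriction A=\mathrm{id}_A$).
   Context: ${}^\kappa\mu$ carries the topology whose basic open sets are $N_s=\{x\in{}^\kappa\mu : s\subseteq x\}$ for $s$ a function from some ordinal $\alpha<\kappa$ to $\mu$. *)

theory Defs
  imports "HOL-Analysis.Analysis"
begin

text \<open>The cardinal kappa is represented by a cardinal order r on the type 'k
(a well-order on UNIV that is an initial ordinal). Ordinals alpha < kappa
correspond to proper initial segments of r, i.e. the sets underS r a.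
The cardinal mu is represented by a type 'm with a distinguished element z
playing the role of 0.\<close>

definition basic_nbhds :: "'k rel \<Rightarrow> ('k \<Rightarrow> 'm) set set" where
  "basic_nbhds r = {{x. \<forall>b \<in> underS r a. x b = s b} | a s. True}"

definition kappa_mu_top :: "'k rel \<Rightarrow> ('k \<Rightarrow> 'm) topology" where
  "kappa_mu_top r = topology_generated_by (basic_nbhds r)"

definition fin_zero_set :: "'m \<Rightarrow> ('k \<Rightarrow> 'm) set" where
  "fin_zero_set z = {x. finite {a. x a = z}}"

end

(* Closedness: since cf(kappa) > omega, countably many zeros of a point x all lie below some
   a < kappa, and every point agreeing with x below a shares them; so a point with infinitely
   many zeros has a neighbourhood of such points.

   Non-retraction: let f be a retraction onto A. For finite T the point with zeros exactly on T
   lies in A and is fixed by f, so by continuity there is g(T) above T such that f keeps the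
   zeros on T at every point agreeing with it below g(T). The sequence
   alpha_n = g {alpha_0, ..., alpha_(n-1)} is increasing, and the point with zeros exactly at
   the alpha_n agrees below alpha_(n+1) with the point with zeros at alpha_0, ..., alpha_n.
   Hence its image under f vanishes at every alpha_n, which contradicts membership in A. *)

theory Submission
  imports Defs
begin

unbundle cardinal_syntax

definition nbhd :: "'k rel \<Rightarrow> 'k \<Rightarrow> ('k \<Rightarrow> 'm) \<Rightarrow> ('k \<Rightarrow> 'm) set" where
  "nbhd r a x = {w. \<forall>b \<in> underS r a. w b = x b}"

lemma self_in_nbhd [simp]: "x \<in> nbhd r a x"
  by (simp add: nbhd_def)

lemma nbhd_antimono: "underS r a \<subseteq> underS r b \<Longrightarrow> nbhd r b x \<subseteq> nbhd r a x"
  by (auto simp: nbhd_def)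

lemma topspace_kappa_mu_top [simp]: "topspace (kappa_mu_top r) = UNIV"
  unfolding kappa_mu_top_def topology_generated_by_topspace basic_nbhds_def by blast

lemma openin_nbhd: "openin (kappa_mu_top r) (nbhd r a x)"
  unfolding kappa_mu_top_def openin_topology_generated_by_iff
  by (rule generate_topology_on.Basis) (auto simp: basic_nbhds_def nbhd_def)

lemma Linear_order_underS_chain:
  assumes "Linear_order r"
  shows "underS r a \<subseteq> underS r b \<or> underS r b \<subseteq> underS r a"
proof (cases "a = b \<or> a \<notin> Field r \<or> b \<notin> Field r")
  case False
  then have "(a, b) \<in> r \<or> (b, a) \<in> r"
    using assms by (simp add: linear_order_on_def total_on_def)
  then show ?thesis
    using False by (auto simp: underS_incl_iff [OF assms])
qed (auto simp: underS_empty)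

lemma generate_topology_on_nbhds:
  assumes "Linear_order r" "generate_topology_on (basic_nbhds r) U" "x \<in> U"
  shows "\<exists>a. nbhd r a x \<subseteq> U"
  using assms(2,3)
proof (induction arbitrary: x)
  case (Int A B)
  obtain a where a: "nbhd r a x \<subseteq> A"
    using Int.IH(1) Int.prems by blast
  obtain b where b: "nbhd r b x \<subseteq> B"
    using Int.IH(2) Int.prems by blast
  consider "underS r a \<subseteq> underS r b" | "underS r b \<subseteq> underS r a"
    using Linear_order_underS_chain [OF assms(1)] by blast
  then show ?case
  proof cases
    case 1
    then show ?thesis
      using nbhd_antimono [OF 1, of x] a b by blast
  next
    case 2
    then show ?thesis
      using nbhd_antimono [OF 2, of x] a b by blast
  qed
next
  case (UN K)
  then obtain k where k: "k \<in> K" "x \<in> k"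
    by blast
  then obtain a where "nbhd r a x \<subseteq> k"
    using UN.IH by blast
  then show ?case
    using k(1) by blast
next
  case (Basis s)
  then obtain a t where "s = nbhd r a t"
    unfolding basic_nbhds_def nbhd_def by blast
  with Basis.prems have "s = nbhd r a x"
    by (auto simp: nbhd_def)
  then show ?case
    by blast
qed simp

lemma openin_kappa_mu_top_iff:
  assumes "Linear_order r"
  shows "openin (kappa_mu_top r) U \<longleftrightarrow> (\<forall>x \<in> U. \<exists>a. nbhd r a x \<subseteq> U)"
proof
  assume "openin (kappa_mu_top r) U"
  then have "generate_topology_on (basic_nbhds r) U"
    by (simp add: kappa_mu_top_def openin_topology_generated_by_iff)
  then show "\<forall>x \<in> U. \<exists>a. nbhd r a x \<subseteq> U"
    using generate_topology_on_nbhds [OF assms] by blast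
next
  assume nbhds: "\<forall>x \<in> U. \<exists>a. nbhd r a x \<subseteq> U"
  show "openin (kappa_mu_top r) U"
  proof (subst openin_subopen, intro ballI)
    fix x
    assume "x \<in> U"
    then obtain a where "nbhd r a x \<subseteq> U"
      using nbhds by blast
    then show "\<exists>T. openin (kappa_mu_top r) T \<and> x \<in> T \<and> T \<subseteq> U"
      by (intro exI [of _ "nbhd r a x"] conjI openin_nbhd self_in_nbhd)
  qed
qed

lemma continuous_map_kappa_mu_top_nbhd:
  assumes "Linear_order r" "continuous_map (kappa_mu_top r) (kappa_mu_top r) f"
  shows "\<exists>d. f ` nbhd r d x \<subseteq> nbhd r e (f x)"
proof -
  have "openin (kappa_mu_top r) {w. f w \<in> nbhd r e (f x)}"
    using openin_continuous_map_preimage [OF assms(2) openin_nbhd] by simp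
  then have "\<forall>y \<in> {w. f w \<in> nbhd r e (f x)}. \<exists>d. nbhd r d y \<subseteq> {w. f w \<in> nbhd r e (f x)}"
    by (simp only: openin_kappa_mu_top_iff [OF assms(1)])
  moreover have "x \<in> {w. f w \<in> nbhd r e (f x)}"
    by simp
  ultimately obtain d where "nbhd r d x \<subseteq> {w. f w \<in> nbhd r e (f x)}"
    by blast
  then show ?thesis
    by blast
qed

lemma card_order_Field: "card_order r \<Longrightarrow> Field r = UNIV"
  using card_order_on_Card_order by auto

lemma card_order_Card_order: "card_order r \<Longrightarrow> Card_order r"
  by (rule conjunct2 [OF card_order_on_Card_order])

lemma card_order_Linear_order: "card_order r \<Longrightarrow> Linear_order r"
  using card_order_on_well_order_on card_order_Field by (fastforce simp: well_order_on_def)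

lemma card_order_total:
  assumes "card_order r"
  shows "(a, b) \<in> r \<or> (b, a) \<in> r"
proof (cases "a = b")
  case True
  then show ?thesis
    using card_order_Linear_order [OF assms] card_order_Field [OF assms]
    by (simp add: order_on_defs refl_on_def)
next
  case False
  then show ?thesis
    using card_order_Linear_order [OF assms] card_order_Field [OF assms]
    by (simp add: linear_order_on_def total_on_def)
qed

lemma card_order_infinite_underS_exists:
  assumes "card_order r" "infinite (UNIV :: 'k set)"
  shows "\<exists>d. (c :: 'k) \<in> underS r d"
proof -
  have "infinite (Field r)"
    using assms by (simp add: card_order_Field)
  then have "Field r \<noteq> under r c"
    using Card_order_infinite_not_under [OF card_order_Card_order [OF assms(1)]] by blast
  then obtain d where "(d, c) \<notin> r"
    using card_order_Field [OF assms(1)] by (auto simp: under_def)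
  moreover have "(c, d) \<in> r \<or> (d, c) \<in> r"
    by (rule card_order_total [OF assms(1)])
  ultimately show ?thesis
    by (auto simp: underS_def)
qed

lemma card_order_finite_bounded:
  assumes "card_order r" "infinite (UNIV :: 'k set)" "finite B"
  shows "\<exists>d. B \<subseteq> underS r (d :: 'k)"
  using assms(3)
proof (induction rule: finite_induct)
  case (insert c B)
  then obtain d where d: "B \<subseteq> underS r d"
    by blast
  obtain e where e: "c \<in> underS r e"
    using card_order_infinite_underS_exists [OF assms(1,2)] by blast
  consider "underS r d \<subseteq> underS r e" | "underS r e \<subseteq> underS r d"
    using Linear_order_underS_chain [OF card_order_Linear_order [OF assms(1)]] by blast
  then show ?case
  proof cases
    case 1
    then have "insert c B \<subseteq> underS r e"
      using d e by auto
    then show ?thesis ..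
  next
    case 2
    then have "insert c B \<subseteq> underS r d"
      using d e by auto
    then show ?thesis ..
  qed
qed simp

lemma regularCard_countable_bounded:
  assumes "card_order r" "regularCard r" "\<not> countable (UNIV :: 'k set)" "countable B"
  shows "\<exists>d. B \<subseteq> underS r (d :: 'k)"
proof -
  have fld: "Field r = UNIV"
    by (rule card_order_Field [OF assms(1)])
  have Card: "Card_order r"
    by (rule card_order_Card_order [OF assms(1)])
  have "trans r" "antisym r"
    using card_order_Linear_order [OF assms(1)] by (simp_all add: order_on_defs)
  then have chain: "relChain r (underS r)"
    by (simp add: relChain_def underS_incr)
  have "infinite (UNIV :: 'k set)"
    using assms(3) by (auto dest: countable_finite)
  then have cover: "B \<subseteq> (\<Union>i \<in> Field r. underS r i)"
    using card_order_infinite_underS_exists [OF assms(1)] by (auto simp: fld)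
  have "\<not> (\<exists>f. inj_on f (UNIV :: 'k set) \<and> f ` UNIV \<subseteq> B)"
  proof
    assume "\<exists>f. inj_on f (UNIV :: 'k set) \<and> f ` UNIV \<subseteq> B"
    then obtain f where f: "inj_on f (UNIV :: 'k set)" "f ` UNIV \<subseteq> B"
      by blast
    have "countable (UNIV :: 'k set)"
      using countable_image_inj_on [OF countable_subset [OF f(2) assms(4)] f(1)] .
    with assms(3) show False ..
  qed
  then have "|B| <o |UNIV :: 'k set|"
    by (rule card_of_ordLess [THEN iffD1])
  moreover have "|UNIV :: 'k set| =o r"
    using card_of_Field_ordIso [OF Card] by (simp add: fld)
  ultimately have "|B| <o r"
    by (rule ordLess_ordIso_trans)
  then have "\<exists>i \<in> Field r. B \<subseteq> underS r i"
    by (rule regularCard_UNION [OF Card assms(2) chain cover])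
  then show ?thesis
    by blast
qed

lemma closedin_fin_zero_set:
  assumes "card_order r" "regularCard r" "\<not> countable (UNIV :: 'k set)"
  shows "closedin (kappa_mu_top r) (fin_zero_set z :: ('k \<Rightarrow> 'm) set)"
proof -
  have "\<exists>d. nbhd r d x \<subseteq> - fin_zero_set z" if "x \<notin> fin_zero_set z" for x :: "'k \<Rightarrow> 'm"
  proof -
    have "infinite {a. x a = z}"
      using that by (simp add: fin_zero_set_def)
    then obtain C where C: "C \<subseteq> {a. x a = z}" "countable C" "infinite C"
      using infinite_countable_subset' by blast
    then obtain d where d: "C \<subseteq> underS r d"
      using regularCard_countable_bounded [OF assms] by blast
    have "infinite {a. w a = z}" if "w \<in> nbhd r d x" for w
    proof -
      have "C \<subseteq> {a. w a = z}"
        using C(1) d that by (auto simp: nbhd_def)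
      then show ?thesis
        using C(3) finite_subset by blast
    qed
    then show ?thesis
      by (auto simp: fin_zero_set_def)
  qed
  then have "openin (kappa_mu_top r) (- fin_zero_set z :: ('k \<Rightarrow> 'm) set)"
    by (simp add: openin_kappa_mu_top_iff [OF card_order_Linear_order [OF assms(1)]])
  then show ?thesis
    by (simp add: closedin_def Compl_eq_Diff_UNIV)
qed

lemma continuous_map_kappa_mu_top_finite_agree:
  assumes "card_order r" "infinite (UNIV :: 'k set)"
    and "continuous_map (kappa_mu_top r) (kappa_mu_top r) f" "finite T"
  shows "\<exists>d. T \<subseteq> underS r (d :: 'k) \<and> (\<forall>w \<in> nbhd r d x. \<forall>c \<in> T. f w c = f x c)"
proof -
  have lin: "Linear_order r"
    by (rule card_order_Linear_order [OF assms(1)])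
  obtain e where e: "T \<subseteq> underS r e"
    using card_order_finite_bounded [OF assms(1,2,4)] by blast
  obtain d0 where d0: "f ` nbhd r d0 x \<subseteq> nbhd r e (f x)"
    using continuous_map_kappa_mu_top_nbhd [OF lin assms(3)] by blast
  obtain d where d: "insert d0 T \<subseteq> underS r d"
    using card_order_finite_bounded [OF assms(1,2)] assms(4) by blast
  have "underS r d0 \<subseteq> underS r d"
  proof (rule underS_incr)
    show "trans r" "antisym r"
      using lin by (simp_all add: order_on_defs)
    show "(d0, d) \<in> r"
      using d by (simp add: underS_def)
  qed
  then have "nbhd r d x \<subseteq> nbhd r d0 x"
    by (rule nbhd_antimono)
  have "f w c = f x c" if "w \<in> nbhd r d x" "c \<in> T" for w c
  proof -
    have "f w \<in> nbhd r e (f x)"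
      using d0 \<open>nbhd r d x \<subseteq> nbhd r d0 x\<close> that(1) by blast
    then show ?thesis
      using e that(2) by (auto simp: nbhd_def)
  qed
  with d show ?thesis
    by blast
qed

lemma underS_asym: "antisym r \<Longrightarrow> a \<in> underS r b \<Longrightarrow> b \<notin> underS r a"
  by (auto simp: underS_def antisym_def)

lemma increasing_sequence_from_bounds:
  assumes "antisym r" "\<And>T. finite T \<Longrightarrow> T \<subseteq> underS r (g T)"
  obtains \<alpha> :: "nat \<Rightarrow> 'k"
  where "\<And>n. \<alpha> n = g (\<alpha> ` {..<n})" "inj \<alpha>" "\<And>n. range \<alpha> \<inter> underS r (\<alpha> n) = \<alpha> ` {..<n}"
proof -
  define S where "S = rec_nat {} (\<lambda>_ T. insert (g T) T)"
  define \<alpha> where "\<alpha> n = g (S n)" for n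
  have "S n = \<alpha> ` {..<n}" for n
    by (induction n) (simp_all add: S_def \<alpha>_def lessThan_Suc)
  then have \<alpha>_rec: "\<alpha> n = g (\<alpha> ` {..<n})" for n
    unfolding \<alpha>_def [of n] by simp
  have less: "\<alpha> m \<in> underS r (\<alpha> n)" if "m < n" for m n
    using assms(2) [of "\<alpha> ` {..<n}"] that \<alpha>_rec [of n] by auto
  have "inj \<alpha>"
  proof (rule injI)
    fix m n
    assume "\<alpha> m = \<alpha> n"
    then show "m = n"
      using less [of m n] less [of n m] by (metis linorder_neqE_nat underS_notIn)
  qed
  moreover have "range \<alpha> \<inter> underS r (\<alpha> n) = \<alpha> ` {..<n}" for n
  proof
    show "range \<alpha> \<inter> underS r (\<alpha> n) \<subseteq> \<alpha> ` {..<n}"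
    proof clarify
      fix k
      assume k: "\<alpha> k \<in> underS r (\<alpha> n)"
      have "\<not> n < k"
        using k less [of n k] underS_asym [OF assms(1)] by blast
      moreover have "k \<noteq> n"
        using k underS_notIn by metis
      ultimately show "\<alpha> k \<in> \<alpha> ` {..<n}"
        by simp
    qed
    show "\<alpha> ` {..<n} \<subseteq> range \<alpha> \<inter> underS r (\<alpha> n)"
      using less by auto
  qed
  ultimately show ?thesis
    using \<alpha>_rec that by blast
qed

definition zeros_at :: "'m \<Rightarrow> 'm \<Rightarrow> 'k set \<Rightarrow> 'k \<Rightarrow> 'm" where
  "zeros_at z y T = (\<lambda>b. if b \<in> T then z else y)"

lemma zeros_at_in_fin_zero_set: "y \<noteq> z \<Longrightarrow> finite T \<Longrightarrow> zeros_at z y T \<in> fin_zero_set z"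
  by (simp add: zeros_at_def fin_zero_set_def)

lemma fin_zero_set_retraction_zero_bound:
  assumes "card_order r" "infinite (UNIV :: 'k set)" "(y :: 'm) \<noteq> z"
    and f: "continuous_map (kappa_mu_top r) (subtopology (kappa_mu_top r) (fin_zero_set z)) f"
    and fixed: "\<forall>x \<in> fin_zero_set z. f x = x"
  obtains g :: "'k set \<Rightarrow> 'k"
  where "\<And>T. finite T \<Longrightarrow> T \<subseteq> underS r (g T)"
    and "\<And>T w c. finite T \<Longrightarrow> w \<in> nbhd r (g T) (zeros_at z y T) \<Longrightarrow> c \<in> T \<Longrightarrow> f w c = z"
proof -
  have cont: "continuous_map (kappa_mu_top r) (kappa_mu_top r) f"
    using f by (simp add: continuous_map_in_subtopology)
  have "\<exists>d. T \<subseteq> underS r d \<and> (\<forall>w \<in> nbhd r d (zeros_at z y T). \<forall>c \<in> T. f w c = z)"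
    if T: "finite T" for T
  proof -
    obtain d where "T \<subseteq> underS r d"
      and "\<forall>w \<in> nbhd r d (zeros_at z y T). \<forall>c \<in> T. f w c = f (zeros_at z y T) c"
      using continuous_map_kappa_mu_top_finite_agree [OF assms(1,2) cont T] by blast
    moreover have "f (zeros_at z y T) = zeros_at z y T"
      using fixed zeros_at_in_fin_zero_set [OF assms(3) T] by blast
    ultimately show ?thesis
      by (auto simp: zeros_at_def)
  qed
  then have "\<forall>T. \<exists>d. finite T \<longrightarrow>
      T \<subseteq> underS r d \<and> (\<forall>w \<in> nbhd r d (zeros_at z y T). \<forall>c \<in> T. f w c = z)"
    by blast
  from choice [OF this] obtain g where g: "\<forall>T. finite T \<longrightarrow>
      T \<subseteq> underS r (g T) \<and> (\<forall>w \<in> nbhd r (g T) (zeros_at z y T). \<forall>c \<in> T. f w c = z)"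
    by blast
  show ?thesis
  proof (rule that)
    show "\<And>T. finite T \<Longrightarrow> T \<subseteq> underS r (g T)"
      using g by blast
    show "\<And>T w c. finite T \<Longrightarrow> w \<in> nbhd r (g T) (zeros_at z y T) \<Longrightarrow> c \<in> T \<Longrightarrow> f w c = z"
      using g by blast
  qed
qed

lemma fin_zero_set_not_retract:
  assumes "card_order r" "infinite (UNIV :: 'k set)" "(y :: 'm) \<noteq> z"
  shows "\<not> (\<exists>f. continuous_map (kappa_mu_top r) (subtopology (kappa_mu_top r) (fin_zero_set z)) f
               \<and> (\<forall>x \<in> fin_zero_set z. f x = (x :: 'k \<Rightarrow> 'm)))"
proof
  assume "\<exists>f. continuous_map (kappa_mu_top r) (subtopology (kappa_mu_top r) (fin_zero_set z)) f
               \<and> (\<forall>x \<in> fin_zero_set z. f x = x)"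
  then obtain f where f: "continuous_map (kappa_mu_top r) (subtopology (kappa_mu_top r) (fin_zero_set z)) f"
    and fixed: "\<forall>x \<in> fin_zero_set z. f x = x"
    by blast
  obtain g where g_bound: "\<And>T. finite T \<Longrightarrow> T \<subseteq> underS r (g T)"
    and g_zero: "\<And>T w c. finite T \<Longrightarrow> w \<in> nbhd r (g T) (zeros_at z y T) \<Longrightarrow> c \<in> T \<Longrightarrow> f w c = z"
    using fin_zero_set_retraction_zero_bound [OF assms f fixed] by blast
  have "antisym r"
    using card_order_Linear_order [OF assms(1)] by (simp add: order_on_defs)
  then obtain \<alpha> :: "nat \<Rightarrow> 'k" where \<alpha>: "\<And>n. \<alpha> n = g (\<alpha> ` {..<n})" "inj \<alpha>"
    "\<And>n. range \<alpha> \<inter> underS r (\<alpha> n) = \<alpha> ` {..<n}"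
    using increasing_sequence_from_bounds [OF _ g_bound] by blast
  let ?x = "zeros_at z y (range \<alpha>)"
  have near: "?x \<in> nbhd r (\<alpha> n) (zeros_at z y (\<alpha> ` {..<n}))" for n
  proof -
    have "b \<in> range \<alpha> \<longleftrightarrow> b \<in> \<alpha> ` {..<n}" if "b \<in> underS r (\<alpha> n)" for b
      using \<alpha>(3) [of n] that by blast
    then show ?thesis
      by (simp add: nbhd_def zeros_at_def)
  qed
  have "f ?x (\<alpha> m) = z" for m
  proof (rule g_zero)
    show "?x \<in> nbhd r (g (\<alpha> ` {..<Suc m})) (zeros_at z y (\<alpha> ` {..<Suc m}))"
      using near [of "Suc m"] by (simp only: \<alpha>(1) [of "Suc m"])
  qed auto
  then have "range \<alpha> \<subseteq> {a. f ?x a = z}"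
    by auto
  moreover have "f ?x \<in> fin_zero_set z"
    using continuous_map_image_subset_topspace [OF f] by auto
  ultimately have "finite (range \<alpha>)"
    by (auto simp: fin_zero_set_def intro: finite_subset)
  with \<alpha>(2) show False
    by (simp add: finite_image_iff)
qed

theorem proposition1p4:
  fixes r :: "'k rel" and z :: 'm
  assumes "card_order r"
    and "regularCard r"
    and "\<not> countable (UNIV :: 'k set)"
    and "\<exists>y :: 'm. y \<noteq> z"
  shows "closedin (kappa_mu_top r) (fin_zero_set z :: ('k \<Rightarrow> 'm) set) \<and>
         \<not> (\<exists>f. continuous_map (kappa_mu_top r) (subtopology (kappa_mu_top r) (fin_zero_set z)) f
               \<and> (\<forall>x \<in> fin_zero_set z. f x = x))"
proof
  show "closedin (kappa_mu_top r) (fin_zero_set z :: ('k \<Rightarrow> 'm) set)"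
    by (rule closedin_fin_zero_set [OF assms(1-3)])
next
  obtain y :: 'm where y: "y \<noteq> z"
    using assms(4) by blast
  have "infinite (UNIV :: 'k set)"
    using assms(3) by (auto dest: countable_finite)
  then show "\<not> (\<exists>f. continuous_map (kappa_mu_top r) (subtopology (kappa_mu_top r) (fin_zero_set z)) f
               \<and> (\<forall>x \<in> fin_zero_set z. f x = x))"
    by (rule fin_zero_set_not_retract [OF assms(1) _ y])
qed

end
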